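(* Let $\mathcal{T}$ be the scheme on $\mathcal{M}$ given by $\mathcal{T}(\mathbf{p})_{2i}=p_i$ and $\mathcal{T}(\mathbf{p})_{2i+1}=M_{1/2}(M^1_i,M^2_i)$, where $$M^1_i=M_{-25/128}\big(M_{3/153}(p_i,p_{i-2}),\,p_{i-1}\big),\qquad M^2_i=M_{-25/128}\big(M_{3/153}(p_{i+1},p_{i+3}),\,p_{i+2}\big).$$ Then $\delta(\mathcal{T}(\mathbf{p}))\le 0.9844\,\delta(\mathbf{p})$ for all manifold data $\mathbf{p}$, and $\mathcal{T}$ is convergent.
   Context: $\mathcal{M}$ is a geodesically complete connected Riemannian manifold with distance $d$. $M_t(p_0,p_1)$ is the geodesic average: the point at parameter $t$ on a fixed minimal geodesic $\gamma$ with $\gamma(0)=p_0,\gamma(1)=p_1$, extended beyond $[0,1]$ when needed (assumed defined for $t=-25/128$), with $d(p_0,M_t(p_0,p_1))=|t|d(p_0,p_1)$ and $d(M_t(p_0,p_1),p_1)=|1-t|d(p_0,p_1)$. Data $\mathbf{p}=(p_i)_{i\in\mathbb{Z}}$, $\delta(\mathbf{p})=\sup_id(p_i,p_{i+1})<\infty$. The scheme is the symmetric-geodesic-inductive-mean adaptation of the linear interpolatory 6-point scheme $f_{2i+1}\mapsto\frac1{256}(3f_{i-2}-25f_{i-1}+150f_i+150f_{i+1}-25f_{i+2}+3f_{i+3})$. Convergence: for every data $\mathbf{p}$ the curves $\mathrm{PG}_k(\mathcal{T}^k(\mathbf{p}))$ converge uniformly on $\mathbb{R}$, where $\mathrm{PG}_k(\mathbf{q})(t)=M_{2^kt-n}(q_n,q_{n+1})$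 for $t\in[2^{-k}n,2^{-k}(n+1))$. *)

theory Defs
  imports "HOL-Analysis.Analysis"
begin

text \<open>Abstract setting: the manifold is modelled by its Riemannian distance (a complete
metric space, by Hopf--Rinow) together with the geodesic average Mt p0 p1.\<close>

definition geodesic_average :: "(real \<Rightarrow> 'a::metric_space \<Rightarrow> 'a \<Rightarrow> 'a) \<Rightarrow> bool" where
  "geodesic_average Mav \<longleftrightarrow>
     (\<forall>t \<in> {0..1} \<union> {-25/128}. \<forall>x y.
        dist x (Mav t x y) = \<bar>t\<bar> * dist x y \<and>
        dist (Mav t x y) y = \<bar>1 - t\<bar> * dist x y)"

definition delta :: "(int \<Rightarrow> 'a::metric_space) \<Rightarrow> real" where
  "delta p = (SUP i. dist (p i) (p (i + 1)))"

definition scheme6 :: "(real \<Rightarrow> 'a \<Rightarrow> 'a \<Rightarrow> 'a) \<Rightarrow> (int \<Rightarrow> 'a) \<Rightarrow> (int \<Rightarrow> 'a)" where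
  "scheme6 Mav p = (\<lambda>j. if even j then p (j div 2)
     else (let i = j div 2;
               M1 = Mav (-25/128) (Mav (3/153) (p i) (p (i - 2))) (p (i - 1));
               M2 = Mav (-25/128) (Mav (3/153) (p (i + 1)) (p (i + 3))) (p (i + 2))
           in Mav (1/2) M1 M2))"

definition PG :: "(real \<Rightarrow> 'a \<Rightarrow> 'a \<Rightarrow> 'a) \<Rightarrow> nat \<Rightarrow> (int \<Rightarrow> 'a) \<Rightarrow> real \<Rightarrow> 'a" where
  "PG Mav k q t = (let n = \<lfloor>2 ^ k * t\<rfloor> in Mav (2 ^ k * t - of_int n) (q n) (q (n + 1)))"

end

theory Submission
  imports Defs
begin

(* Write D = delta p.  Each inserted point T(p)_{2i+1} is obtained from p_i by a
   short extrapolation M^1_i (at distance <= 4743/19584 D from p_i, by the triangle inequality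
   and the two geodesic-average identities), and symmetrically from p_{i+1}; taking the midpoint
   of M^1_i and M^2_i gives distance <= 9639/9792 D < 0.9844 D to both neighbours.  Hence
   delta (T p) <= 0.9844 delta p, and iterating, delta (T^k p) <= 0.9844^k delta p.
   For convergence, the polygon PG_{k+1}(T^{k+1} p) stays within 3 delta (T^k p) of
   PG_k(T^k p) pointwise, because both curves run near the common vertex p_n = T(p)_{2n};
   so consecutive curves are at uniform distance <= 3 D 0.9844^k, and a sequence of functions
   with geometrically decaying uniform steps into a complete space converges uniformly. *)

lemma geodesic_averageD:
  assumes "geodesic_average Mav" "t \<in> {0..1} \<union> {-25/128}"
  shows "dist x (Mav t x y) = \<bar>t\<bar> * dist x y"
    and "dist (Mav t x y) y = \<bar>1 - t\<bar> * dist x y"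
  using assms unfolding geodesic_average_def by blast+

text \<open>An interpolating average (parameter in [0,1]) stays within the segment length of its
  start point; this controls how far the polygon curve strays from its vertices.\<close>
lemma dist_geodesic_average_le:
  assumes G: "geodesic_average Mav" and "0 \<le> s" "s \<le> 1"
  shows "dist x (Mav s x y) \<le> dist x y"
proof -
  have "dist x (Mav s x y) = s * dist x y" using geodesic_averageD(1)[OF G] assms by simp
  also have "\<dots> \<le> 1 * dist x y" using assms by (intro mult_right_mono) auto
  finally show ?thesis by simp
qed

lemma delta_upper:
  assumes "bdd_above (range (\<lambda>i. dist (p i) (p (i + 1))))"
  shows "dist (p i) (p (i + 1)) \<le> delta p"
  unfolding delta_def by (rule cSUP_upper[OF _ assms]) simp

lemma delta_nonneg:
  assumes "bdd_above (range (\<lambda>i. dist (p i) (p (i + 1))))"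
  shows "0 \<le> delta p"
  using delta_upper[OF assms, of 0] zero_le_dist order_trans by blast

lemma delta_least:
  assumes "\<And>i. dist (p i) (p (i + 1)) \<le> D"
  shows "delta p \<le> D"
  unfolding delta_def by (rule cSUP_least) (use assms in auto)

lemma dist_two_steps:
  fixes p :: "int \<Rightarrow> 'a::metric_space"
  assumes "\<And>i. dist (p i) (p (i + 1)) \<le> D"
  shows "dist (p i) (p (i + 2)) \<le> 2 * D"
proof -
  have "dist (p i) (p (i + 2)) \<le> dist (p i) (p (i + 1)) + dist (p (i + 1)) (p (i + 1 + 1))"
    using dist_triangle[of "p i" "p (i + 2)" "p (i + 1)"] by (simp add: add.assoc)
  then show ?thesis using assms[of i] assms[of "i + 1"] by linarith
qed

subsection \<open>The insertion rule contracts delta\<close>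

lemma extrapolation_bound:
  fixes x y z :: "'a::metric_space"
  assumes G: "geodesic_average Mav" and xy: "dist x y \<le> 2 * D" and xz: "dist x z \<le> D"
  shows "dist x (Mav (-25/128) (Mav (3/153) x y) z) \<le> 4743/19584 * D"
proof -
  define A where "A = Mav (3/153) x y"
  have xA: "dist x A = 3/153 * dist x y"
    unfolding A_def using geodesic_averageD(1)[OF G, of "3/153"] by simp
  have "dist A (Mav (-25/128) A z) = 25/128 * dist A z"
    using geodesic_averageD(1)[OF G, of "-25/128"] by simp
  moreover have "dist A z \<le> dist x A + dist x z" by (rule dist_triangle3)
  moreover have "dist x (Mav (-25/128) A z) \<le> dist x A + dist A (Mav (-25/128) A z)"
    by (rule dist_triangle)
  ultimately show ?thesis unfolding A_def[symmetric] using xA xy xz by linarith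
qed

lemma midpoint_bounds:
  fixes a b M1 M2 :: "'a::metric_space"
  assumes G: "geodesic_average Mav"
    and "dist a M1 \<le> e1" "dist b M2 \<le> e2" "dist a b \<le> D"
  shows "dist a (Mav (1/2) M1 M2) \<le> 3/2 * e1 + 1/2 * D + 1/2 * e2"
    and "dist (Mav (1/2) M1 M2) b \<le> 1/2 * e1 + 1/2 * D + 3/2 * e2"
proof -
  define T where "T = Mav (1/2) M1 M2"
  have M1T: "dist M1 T = 1/2 * dist M1 M2"
    using geodesic_averageD(1)[OF G, of "1/2"] unfolding T_def by simp
  have TM2: "dist T M2 = 1/2 * dist M1 M2"
    using geodesic_averageD(2)[OF G, of "1/2"] unfolding T_def by simp
  have M1M2: "dist M1 M2 \<le> dist a M1 + dist a b + dist b M2"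
    using dist_triangle3[of M1 M2 a] dist_triangle[of a M2 b] by linarith
  show "dist a T \<le> 3/2 * e1 + 1/2 * D + 1/2 * e2"
    using dist_triangle[of a T M1] M1T M1M2 assms(2-4) by linarith
  show "dist T b \<le> 1/2 * e1 + 1/2 * D + 3/2 * e2"
    using dist_triangle2[of T b M2] TM2 M1M2 assms(2-4) by linarith
qed

lemma scheme6_even: "scheme6 Mav p (2 * i) = p i"
  unfolding scheme6_def by simp

lemma scheme6_odd:
  "scheme6 Mav p (2 * i + 1) =
     Mav (1/2) (Mav (-25/128) (Mav (3/153) (p i) (p (i - 2))) (p (i - 1)))
               (Mav (-25/128) (Mav (3/153) (p (i + 1)) (p (i + 3))) (p (i + 2)))"
  unfolding scheme6_def by (simp add: Let_def)

lemma inserted_point_bounds: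
  assumes G: "geodesic_average Mav"
    and st: "\<And>i. dist (p i) (p (i + 1)) \<le> D"
  shows "dist (p i) (scheme6 Mav p (2 * i + 1)) \<le> 0.9844 * D"
    and "dist (scheme6 Mav p (2 * i + 1)) (p (i + 1)) \<le> 0.9844 * D"
proof -
  have D0: "0 \<le> D" using st[of 0] zero_le_dist order_trans by blast
  have e1: "dist (p i) (Mav (-25/128) (Mav (3/153) (p i) (p (i - 2))) (p (i - 1)))
      \<le> 4743/19584 * D"
  proof (rule extrapolation_bound[OF G])
    show "dist (p i) (p (i - 2)) \<le> 2 * D"
      using dist_two_steps[of p D "i - 2", OF st] by (simp add: dist_commute)
    show "dist (p i) (p (i - 1)) \<le> D" using st[of "i - 1"] by (simp add: dist_commute)
  qed
  have e2: "dist (p (i + 1)) (Mav (-25/128) (Mav (3/153) (p (i + 1)) (p (i + 3))) (p (i + 2)))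
      \<le> 4743/19584 * D"
  proof (rule extrapolation_bound[OF G])
    show "dist (p (i + 1)) (p (i + 3)) \<le> 2 * D"
      using dist_two_steps[of p D "i + 1", OF st] by (simp add: add.assoc)
    show "dist (p (i + 1)) (p (i + 2)) \<le> D" using st[of "i + 1"] by (simp add: add.assoc)
  qed
  have num: "2 * (4743/19584 * D) + 1/2 * D \<le> 0.9844 * D" using D0 by simp
  note mid = midpoint_bounds[OF G e1 e2 st[of i]]
  show "dist (p i) (scheme6 Mav p (2 * i + 1)) \<le> 0.9844 * D"
    unfolding scheme6_odd using mid(1) num by linarith
  show "dist (scheme6 Mav p (2 * i + 1)) (p (i + 1)) \<le> 0.9844 * D"
    unfolding scheme6_odd using mid(2) num by linarith
qed

text \<open>Every new consecutive pair consists of an old point and an adjacent inserted one.\<close>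
lemma scheme6_step_bound:
  assumes G: "geodesic_average Mav"
    and st: "\<And>i. dist (p i) (p (i + 1)) \<le> D"
  shows "dist (scheme6 Mav p j) (scheme6 Mav p (j + 1)) \<le> 0.9844 * D"
proof (cases "even j")
  case True
  then obtain i where "j = 2 * i" by blast
  then show ?thesis using inserted_point_bounds(1)[of Mav p D i, OF G st] by (simp add: scheme6_even)
next
  case False
  then obtain i where j: "j = 2 * i + 1" using oddE by blast
  have "scheme6 Mav p (j + 1) = p (i + 1)"
    using scheme6_even[of Mav p "i + 1"] by (simp add: j algebra_simps)
  then show ?thesis using inserted_point_bounds(2)[of Mav p D i, OF G st] by (simp add: j)
qed

lemma scheme6_bdd:
  assumes G: "geodesic_average Mav"
    and B: "bdd_above (range (\<lambda>i. dist (p i) (p (i + 1))))"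
  shows "bdd_above (range (\<lambda>j. dist (scheme6 Mav p j) (scheme6 Mav p (j + 1))))"
  using scheme6_step_bound[of Mav p "delta p", OF G delta_upper[OF B]] by (intro bdd_aboveI2)

lemma scheme6_delta:
  assumes G: "geodesic_average Mav"
    and B: "bdd_above (range (\<lambda>i. dist (p i) (p (i + 1))))"
  shows "delta (scheme6 Mav p) \<le> 0.9844 * delta p"
  by (rule delta_least[of "scheme6 Mav p", OF scheme6_step_bound[of Mav p "delta p", OF G delta_upper[OF B]]])

lemma scheme6_iterate:
  assumes G: "geodesic_average Mav"
    and B: "bdd_above (range (\<lambda>i. dist (p i) (p (i + 1))))"
  shows "bdd_above (range (\<lambda>i. dist ((scheme6 Mav ^^ k) p i) ((scheme6 Mav ^^ k) p (i + 1))))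
     \<and> delta ((scheme6 Mav ^^ k) p) \<le> 0.9844 ^ k * delta p"
proof (induction k)
  case 0
  then show ?case using B by simp
next
  case (Suc k)
  let ?q = "(scheme6 Mav ^^ k) p"
  have Bq: "bdd_above (range (\<lambda>i. dist (?q i) (?q (i + 1))))" using Suc.IH ..
  have "delta (scheme6 Mav ?q) \<le> 0.9844 * delta ?q" by (rule scheme6_delta[OF G Bq])
  also have "\<dots> \<le> 0.9844 * (0.9844 ^ k * delta p)" using Suc.IH by simp
  finally show ?case using scheme6_bdd[OF G Bq] by simp
qed

subsection \<open>Polygon curves of consecutive refinements are close\<close>

lemma PG_near_vertex:
  assumes G: "geodesic_average Mav"
  shows "dist (q \<lfloor>2 ^ k * t\<rfloor>) (PG Mav k q t)
      \<le> dist (q \<lfloor>2 ^ k * t\<rfloor>) (q (\<lfloor>2 ^ k * t\<rfloor> + 1))"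
proof -
  define x :: real where "x = 2 ^ k * t"
  have "0 \<le> x - of_int \<lfloor>x\<rfloor>" "x - of_int \<lfloor>x\<rfloor> \<le> 1"
    using of_int_floor_le[of x] real_of_int_floor_add_one_gt[of x] by linarith+
  then show ?thesis
    unfolding PG_def x_def[symmetric] Let_def by (rule dist_geodesic_average_le[OF G])
qed

text \<open>The left vertex at level k+1 is the old vertex p_n itself or its right neighbour,
  since the parameter 2^(k+1) t lies in [2n, 2n+2).\<close>
lemma refined_floor_cases:
  fixes t :: real
  shows "\<lfloor>2 ^ Suc k * t\<rfloor> = 2 * \<lfloor>2 ^ k * t\<rfloor> \<or> \<lfloor>2 ^ Suc k * t\<rfloor> = 2 * \<lfloor>2 ^ k * t\<rfloor> + 1"
proof -
  define x :: real where "x = 2 ^ k * t"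
  have x2: "2 ^ Suc k * t = 2 * x" unfolding x_def by simp
  have "2 * \<lfloor>x\<rfloor> \<le> \<lfloor>2 * x\<rfloor>" using of_int_floor_le[of x] by (simp add: le_floor_iff)
  moreover have "2 * x < 2 * of_int \<lfloor>x\<rfloor> + 2"
    using real_of_int_floor_add_one_gt[of x] by linarith
  then have "\<lfloor>2 * x\<rfloor> < 2 * \<lfloor>x\<rfloor> + 2" by (simp add: floor_less_iff)
  ultimately show ?thesis unfolding x2 x_def[symmetric] by linarith
qed

lemma PG_refinement_step:
  assumes G: "geodesic_average Mav"
    and B: "bdd_above (range (\<lambda>i. dist (q i) (q (i + 1))))"
  shows "dist (PG Mav (Suc k) (scheme6 Mav q) t) (PG Mav k q t) \<le> 3 * delta q"
proof -
  define q' where "q' = scheme6 Mav q"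
  have B': "bdd_above (range (\<lambda>i. dist (q' i) (q' (i + 1))))"
    unfolding q'_def by (rule scheme6_bdd[OF G B])
  have dd: "delta q' \<le> delta q"
    unfolding q'_def using scheme6_delta[OF G B] delta_nonneg[OF B] by simp
  define n where "n = \<lfloor>2 ^ k * t\<rfloor>"
  define m where "m = \<lfloor>2 ^ Suc k * t\<rfloor>"
  have q2n: "q' (2 * n) = q n" unfolding q'_def by (rule scheme6_even)
  have vertices: "dist (q n) (q' m) \<le> delta q'"
    using refined_floor_cases[of k t] unfolding m_def[symmetric] n_def[symmetric]
    using q2n delta_nonneg[OF B'] delta_upper[OF B', of "2 * n"] by auto
  have new: "dist (q' m) (PG Mav (Suc k) q' t) \<le> delta q'"
    using PG_near_vertex[OF G, of q' "Suc k" t] delta_upper[OF B', of m] unfolding m_def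
    by linarith
  have old: "dist (q n) (PG Mav k q t) \<le> delta q"
    using PG_near_vertex[OF G, of q k t] delta_upper[OF B, of n] unfolding n_def by linarith
  have "dist (PG Mav (Suc k) q' t) (PG Mav k q t)
      \<le> dist (q' m) (PG Mav (Suc k) q' t) + (dist (q n) (q' m) + dist (q n) (PG Mav k q t))"
    using dist_triangle3[of "PG Mav (Suc k) q' t" "PG Mav k q t" "q' m"]
      dist_triangle3[of "q' m" "PG Mav k q t" "q n"] by linarith
  then show ?thesis using vertices new old dd unfolding q'_def by linarith
qed

lemma PG_iterate_step:
  assumes G: "geodesic_average Mav"
    and B: "bdd_above (range (\<lambda>i. dist (p i) (p (i + 1))))"
  shows "dist (PG Mav (Suc k) ((scheme6 Mav ^^ Suc k) p) t) (PG Mav k ((scheme6 Mav ^^ k) p) t)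
      \<le> 3 * delta p * 0.9844 ^ k"
proof -
  note it = scheme6_iterate[OF G B, of k]
  have "dist (PG Mav (Suc k) ((scheme6 Mav ^^ Suc k) p) t) (PG Mav k ((scheme6 Mav ^^ k) p) t)
      \<le> 3 * delta ((scheme6 Mav ^^ k) p)"
    using PG_refinement_step[OF G conjunct1[OF it], of k t] by simp
  also have "\<dots> \<le> 3 * (0.9844 ^ k * delta p)" using conjunct2[OF it] by simp
  finally show ?thesis by (simp add: mult_ac)
qed

subsection \<open>Geometrically decaying uniform steps give uniform convergence\<close>

lemma dist_telescope_geometric:
  fixes F :: "nat \<Rightarrow> 'b \<Rightarrow> 'a::metric_space"
  assumes st: "\<And>k. dist (F (Suc k) t) (F k t) \<le> C * \<mu> ^ k" and \<mu>: "\<mu> < 1"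
  shows "dist (F n t) (F (n + j) t) \<le> C / (1 - \<mu>) * (\<mu> ^ n - \<mu> ^ (n + j))"
proof (induction j)
  case 0
  then show ?case by simp
next
  case (Suc j)
  have "dist (F n t) (F (n + Suc j) t)
      \<le> dist (F n t) (F (n + j) t) + dist (F (Suc (n + j)) t) (F (n + j) t)"
    using dist_triangle2[of "F n t" "F (Suc (n + j)) t" "F (n + j) t"] by (simp add: dist_commute)
  also have "\<dots> \<le> C / (1 - \<mu>) * (\<mu> ^ n - \<mu> ^ (n + j)) + C * \<mu> ^ (n + j)"
    using Suc st[of "n + j"] by linarith
  also have "\<dots> = C / (1 - \<mu>) * (\<mu> ^ n - \<mu> ^ (n + Suc j))" using \<mu> by (simp add: field_simps)
  finally show ?case .
qed

lemma uniformly_convergent_geometric_steps: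
  fixes F :: "nat \<Rightarrow> 'b \<Rightarrow> 'a::complete_space"
  assumes st: "\<And>k t. dist (F (Suc k) t) (F k t) \<le> C * \<mu> ^ k" and \<mu>: "0 \<le> \<mu>" "\<mu> < 1"
  shows "uniformly_convergent_on UNIV F"
proof (rule Cauchy_uniformly_convergent, rule uniformly_Cauchy_onI')
  define K where "K = C / (1 - \<mu>)"
  have "0 \<le> C" using order_trans[OF zero_le_dist st[of 0 undefined]] by simp
  then have K0: "0 \<le> K" unfolding K_def using \<mu> by simp
  have tail: "dist (F m x) (F n x) \<le> K * \<mu> ^ m" if "m \<le> n" for m n x
  proof -
    obtain j where n: "n = m + j" using \<open>m \<le> n\<close> le_Suc_ex by blast
    have "dist (F m x) (F n x) \<le> K * (\<mu> ^ m - \<mu> ^ (m + j))"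
      unfolding n K_def by (rule dist_telescope_geometric[OF st \<mu>(2)])
    also have "\<dots> \<le> K * \<mu> ^ m" using K0 \<mu> by (simp add: mult_left_mono)
    finally show ?thesis .
  qed
  have "(\<lambda>n. K * \<mu> ^ n) \<longlonglongrightarrow> 0"
    using \<mu> by (intro tendsto_mult_right_zero LIMSEQ_power_zero) simp
  fix e :: real
  assume "e > 0"
  then obtain N where N: "\<And>n. n \<ge> N \<Longrightarrow> K * \<mu> ^ n < e"
    using order_tendstoD(2)[OF \<open>(\<lambda>n. K * \<mu> ^ n) \<longlonglongrightarrow> 0\<close>]
    unfolding eventually_sequentially by blast
  show "\<exists>M. \<forall>x\<in>UNIV. \<forall>m\<ge>M. \<forall>n>m. dist (F m x) (F n x) < e"
  proof (intro exI ballI allI impI)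
    fix x m n
    assume "N \<le> m" "m < n"
    then show "dist (F m x) (F n x) < e" using tail[of m n x] N[of m] by simp
  qed
qed

theorem mainTheorem8:
  fixes Mav :: "real \<Rightarrow> 'a::complete_space \<Rightarrow> 'a \<Rightarrow> 'a"
    and p :: "int \<Rightarrow> 'a"
  assumes "geodesic_average Mav"
    and "bdd_above (range (\<lambda>i. dist (p i) (p (i + 1))))"
  shows "delta (scheme6 Mav p) \<le> 0.9844 * delta p
    \<and> (\<exists>f. uniform_limit UNIV (\<lambda>k. PG Mav k ((scheme6 Mav ^^ k) p)) f sequentially)"
proof
  show "delta (scheme6 Mav p) \<le> 0.9844 * delta p" by (rule scheme6_delta[OF assms])
  have "uniformly_convergent_on UNIV (\<lambda>k. PG Mav k ((scheme6 Mav ^^ k) p))"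
  proof (rule uniformly_convergent_geometric_steps)
    show "dist (PG Mav (Suc k) ((scheme6 Mav ^^ Suc k) p) t) (PG Mav k ((scheme6 Mav ^^ k) p) t)
        \<le> 3 * delta p * 0.9844 ^ k" for k t
      by (rule PG_iterate_step[OF assms])
  qed simp_all
  then show "\<exists>f. uniform_limit UNIV (\<lambda>k. PG Mav k ((scheme6 Mav ^^ k) p)) f sequentially"
    unfolding uniformly_convergent_on_def .
qed

end
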